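(* Let $X=\omega\times\omega$, and let $I$ and $J$ be the ideals on $X$ defined below. Then $\mathscr C_J$ covers $\mathscr C_I$ in the lattice of clones on $X$: we have $\mathscr C_I\subsetneq \mathscr C_J$, and there is no clone $\mathscr D$ on $X$ with $\mathscr C_I\subsetneq\mathscr D\subsetneq\mathscr C_J$. Equivalently, for every $f\in\mathscr C_J\setminus\mathscr C_I$, the clone generated by $\{f\}\cup\mathscr C_I$ equals $\mathscr C_J$.
   Context: A clone on a set $X$ is a set of finitary operations on $X$ containing all projections $\pi^n_k(x_1,\dots,x_n)=x_k$ and closed under composition; clones ordered by inclusion form a lattice. Write elements of $X=\omega\times\omega$ as $(a|b)$, with $a$ the $x$-coordinate and $b$ the $y$-coordinate. Sets of the form $\omega\times\{n\}$ are called lines. The width of $Y\subseteq X$ is $\sup\{|Y\cap(\omega\times\{n\})|:n\in\omega\}$. $I$ is the ideal of all subsets of $X$ of finite width; $J$ is the ideal of all subsets of $X$ whose intersection with every line is finite. For an ideal $K$ on $X$, $\mathscr C_K$ is the set of all finitary operations $f:X^n\to X$ ($n\ge1$) such that $f[A^n]\in K$ for all $A\in K$. *)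

theory Defs
  imports Main
begin

text \<open>The base set X = omega x omega; the point (a|b) is the pair (a, b),
  a the x-coordinate, b the y-coordinate.\<close>
type_synonym pt = "nat \<times> nat"

text \<open>An n-ary operation on X is represented as a pair (n, f) where
  f :: (nat \<Rightarrow> pt) \<Rightarrow> pt only depends on the arguments with index < n;
  this makes the representation canonical (one pair per genuine function X^n \<rightarrow> X).\<close>
type_synonym op = "nat \<times> ((nat \<Rightarrow> pt) \<Rightarrow> pt)"

definition is_op :: "op \<Rightarrow> bool" where
  "is_op p \<longleftrightarrow> fst p \<ge> 1 \<and>
     (\<forall>a b. (\<forall>i < fst p. a i = b i) \<longrightarrow> snd p a = snd p b)"

definition proj :: "nat \<Rightarrow> nat \<Rightarrow> op" where
  "proj n k = (n, \<lambda>a. a k)"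

definition comp_op :: "op \<Rightarrow> nat \<Rightarrow> (nat \<Rightarrow> op) \<Rightarrow> op" where
  "comp_op f m g = (m, \<lambda>a. snd f (\<lambda>i. snd (g i) a))"

definition is_clone :: "op set \<Rightarrow> bool" where
  "is_clone C \<longleftrightarrow> (\<forall>p\<in>C. is_op p)
     \<and> (\<forall>n k. 1 \<le> n \<and> k < n \<longrightarrow> proj n k \<in> C)
     \<and> (\<forall>f\<in>C. \<forall>m g. 1 \<le> m \<and> (\<forall>i < fst f. g i \<in> C \<and> fst (g i) = m)
              \<longrightarrow> comp_op f m g \<in> C)"

definition line :: "nat \<Rightarrow> pt set" where
  "line n = {p. snd p = n}"

definition finite_width :: "pt set \<Rightarrow> bool" where
  "finite_width Y \<longleftrightarrow> (\<exists>k::nat. \<forall>n. finite (Y \<inter> line n) \<and> card (Y \<inter> line n) \<le> k)"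

definition idealI :: "pt set set" where
  "idealI = {Y. finite_width Y}"

definition idealJ :: "pt set set" where
  "idealJ = {Y. \<forall>n. finite (Y \<inter> line n)}"

definition op_image :: "op \<Rightarrow> pt set \<Rightarrow> pt set" where
  "op_image f A = {snd f a | a. \<forall>i < fst f. a i \<in> A}"

definition clone_of_ideal :: "pt set set \<Rightarrow> op set" where
  "clone_of_ideal K = {f. is_op f \<and> (\<forall>A\<in>K. op_image f A \<in> K)}"

end

theory Submission
  imports Defs "HOL-Library.Countable"
begin

definition width_le :: "nat \<Rightarrow> pt set \<Rightarrow> bool" where
  "width_le w Y \<longleftrightarrow> (\<forall>n. finite (Y \<inter> line n) \<and> card (Y \<inter> line n) \<le> w)"

lemma mem_idealI: "Y \<in> idealI \<longleftrightarrow> (\<exists>w. width_le w Y)"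
  unfolding idealI_def finite_width_def width_le_def by simp

lemma mem_idealJ: "Y \<in> idealJ \<longleftrightarrow> (\<forall>n. finite (Y \<inter> line n))"
  unfolding idealJ_def by simp

lemma finite_card_le_subset: "A \<subseteq> B \<Longrightarrow> finite B \<Longrightarrow> card B \<le> w \<Longrightarrow> finite A \<and> card A \<le> w"
  by (meson card_mono finite_subset le_trans)

lemma finite_card_insert_le: "finite X \<and> card X \<le> w \<Longrightarrow> finite (insert x X) \<and> card (insert x X) \<le> Suc w"
  by (simp add: card_insert_if)

lemma width_le_subset: "width_le w Z \<Longrightarrow> Y \<subseteq> Z \<Longrightarrow> width_le w Y"
  unfolding width_le_def by (meson Int_mono finite_card_le_subset order_refl)

lemma width_le_Un: "width_le v Y \<Longrightarrow> width_le w Z \<Longrightarrow> width_le (v + w) (Y \<union> Z)"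
  unfolding width_le_def Int_Un_distrib2
  by (meson add_mono card_Un_le finite_UnI le_trans)

lemma op_imageI: "(\<And>i. i < fst f \<Longrightarrow> a i \<in> A) \<Longrightarrow> snd f a \<in> op_image f A"
  unfolding op_image_def by blast

lemma op_imageE:
  assumes "y \<in> op_image f A"
  obtains a where "\<forall>i<fst f. a i \<in> A" and "y = snd f a"
  using assms unfolding op_image_def by blast

lemma op_image_proj: "k < n \<Longrightarrow> op_image (proj n k) A \<subseteq> A"
  unfolding op_image_def proj_def by auto

lemma is_opI:
  assumes "1 \<le> fst p" and "\<And>a b. \<forall>i<fst p. a i = b i \<Longrightarrow> snd p a = snd p b"
  shows "is_op p"
  using assms unfolding is_op_def by blast

lemma is_op_cong: "is_op p \<Longrightarrow> \<forall>i<fst p. a i = b i \<Longrightarrow> snd p a = snd p b"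
  unfolding is_op_def by blast

lemma op_eqI: "fst p = fst q \<Longrightarrow> (\<And>x. snd p x = snd q x) \<Longrightarrow> p = q"
  by (simp add: prod_eq_iff ext)

lemma is_op_postcomp: "is_op r \<Longrightarrow> is_op (fst r, \<lambda>x. \<phi> (snd r x))"
  unfolding is_op_def by (simp only: fst_conv snd_conv) metis

lemma is_op_comp_op:
  assumes f: "is_op f" and m: "1 \<le> m" and g: "\<forall>i<fst f. is_op (g i) \<and> fst (g i) = m"
  shows "is_op (comp_op f m g)"
proof (rule is_opI)
  fix a b :: "nat \<Rightarrow> pt"
  assume "\<forall>j<fst (comp_op f m g). a j = b j"
  then have "\<forall>j<fst (g i). a j = b j" if "i < fst f" for i
    using g that by (simp add: comp_op_def)
  then have "\<forall>i<fst f. snd (g i) a = snd (g i) b"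
    using g is_op_cong by blast
  then show "snd (comp_op f m g) a = snd (comp_op f m g) b"
    using is_op_cong[OF f] by (simp add: comp_op_def)
qed (use m in \<open>simp add: comp_op_def\<close>)

lemma op_image_comp_op:
  assumes "\<forall>i<fst f. fst (g i) = m"
  shows "op_image (comp_op f m g) A \<subseteq> op_image f (\<Union>i<fst f. op_image (g i) A)"
proof
  fix y assume "y \<in> op_image (comp_op f m g) A"
  then obtain a where a: "\<forall>i<m. a i \<in> A" and y: "y = snd f (\<lambda>i. snd (g i) a)"
    unfolding comp_op_def by (auto elim: op_imageE)
  have "\<forall>i<fst f. snd (g i) a \<in> op_image (g i) A"
    using a assms by (auto intro: op_imageI)
  then show "y \<in> op_image f (\<Union>i<fst f. op_image (g i) A)"
    unfolding y by (auto intro: op_imageI)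
qed

lemma clone_proj: "is_clone D \<Longrightarrow> 1 \<le> n \<Longrightarrow> i < n \<Longrightarrow> proj n i \<in> D"
  unfolding is_clone_def by blast

lemma clone_comp:
  assumes "is_clone D" "f \<in> D" "1 \<le> m" "\<forall>i<fst f. g i \<in> D \<and> fst (g i) = m"
  shows "comp_op f m g \<in> D"
  using assms unfolding is_clone_def by blast

definition is_ideal :: "pt set set \<Rightarrow> bool" where
  "is_ideal K \<longleftrightarrow> {} \<in> K \<and> (\<forall>A\<in>K. \<forall>B\<subseteq>A. B \<in> K) \<and> (\<forall>A\<in>K. \<forall>B\<in>K. A \<union> B \<in> K)"

lemma ideal_subset: "is_ideal K \<Longrightarrow> A \<in> K \<Longrightarrow> B \<subseteq> A \<Longrightarrow> B \<in> K"
  unfolding is_ideal_def by blast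

lemma ideal_UN:
  assumes K: "is_ideal K" and B: "\<forall>i<(n::nat). B i \<in> K"
  shows "(\<Union>i<n. B i) \<in> K"
  using B
proof (induction n)
  case 0
  then show ?case using K unfolding is_ideal_def by simp
next
  case (Suc n)
  have "(\<Union>i<n. B i) \<in> K" "B n \<in> K" using Suc by simp_all
  moreover have "(\<Union>i<Suc n. B i) = B n \<union> (\<Union>i<n. B i)" by (simp add: lessThan_Suc)
  ultimately show ?case using K unfolding is_ideal_def by metis
qed

lemma clone_of_ideal_is_clone:
  assumes K: "is_ideal K"
  shows "is_clone (clone_of_ideal K)"
  unfolding is_clone_def
proof (intro conjI allI impI ballI)
  fix p assume "p \<in> clone_of_ideal K"
  then show "is_op p" unfolding clone_of_ideal_def by simp
next
  fix n k :: nat assume nk: "1 \<le> n \<and> k < n"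
  then have "is_op (proj n k)" unfolding is_op_def proj_def by simp
  moreover have "op_image (proj n k) A \<in> K" if "A \<in> K" for A
    using ideal_subset[OF K that op_image_proj] nk by simp
  ultimately show "proj n k \<in> clone_of_ideal K" unfolding clone_of_ideal_def by blast
next
  fix f m g
  assume f: "f \<in> clone_of_ideal K"
    and g: "1 \<le> m \<and> (\<forall>i<fst f. g i \<in> clone_of_ideal K \<and> fst (g i) = m)"
  have "is_op (comp_op f m g)"
    using f g by (intro is_op_comp_op) (auto simp: clone_of_ideal_def)
  moreover have "op_image (comp_op f m g) A \<in> K" if A: "A \<in> K" for A
  proof -
    have "(\<Union>i<fst f. op_image (g i) A) \<in> K"
      using g A by (intro ideal_UN[OF K]) (auto simp: clone_of_ideal_def)
    then have "op_image f (\<Union>i<fst f. op_image (g i) A) \<in> K"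
      using f by (simp add: clone_of_ideal_def)
    moreover have "op_image (comp_op f m g) A \<subseteq> op_image f (\<Union>i<fst f. op_image (g i) A)"
      using g by (intro op_image_comp_op) simp
    ultimately show ?thesis by (rule ideal_subset[OF K])
  qed
  ultimately show "comp_op f m g \<in> clone_of_ideal K" unfolding clone_of_ideal_def by blast
qed

lemma bounded_range_in_clone:
  assumes "is_ideal K" "is_op p" "Y \<in> K" "\<forall>x. snd p x \<in> Y"
  shows "p \<in> clone_of_ideal K"
proof -
  have "op_image p B \<subseteq> Y" for B using assms(4) unfolding op_image_def by auto
  then have "op_image p B \<in> K" for B by (rule ideal_subset[OF assms(1,3)])
  then show ?thesis using assms(2) unfolding clone_of_ideal_def by blast
qed

lemma is_ideal_idealI: "is_ideal idealI"
proof -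
  have "width_le 0 {}" unfolding width_le_def by simp
  then have "{} \<in> idealI" unfolding mem_idealI by blast
  moreover have "B \<in> idealI" if "A \<in> idealI" "B \<subseteq> A" for A B
    using that width_le_subset unfolding mem_idealI by blast
  moreover have "A \<union> B \<in> idealI" if "A \<in> idealI" "B \<in> idealI" for A B
    using that width_le_Un unfolding mem_idealI by blast
  ultimately show ?thesis unfolding is_ideal_def by blast
qed

lemma is_ideal_idealJ: "is_ideal idealJ"
proof -
  have "B \<in> idealJ" if "A \<in> idealJ" "B \<subseteq> A" for A B
  proof -
    have "B \<inter> line n \<subseteq> A \<inter> line n" for n using that(2) by blast
    then show ?thesis using that(1) unfolding mem_idealJ by (meson finite_subset)
  qed
  moreover have "A \<union> B \<in> idealJ" if "A \<in> idealJ" "B \<in> idealJ" for A B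
    using that unfolding mem_idealJ Int_Un_distrib2 by simp
  moreover have "{} \<in> idealJ" unfolding mem_idealJ by simp
  ultimately show ?thesis unfolding is_ideal_def by blast
qed

lemma idealI_subset_idealJ: "idealI \<subseteq> idealJ"
  by (auto simp: mem_idealI mem_idealJ width_le_def)

text \<open>Every operation preserving I preserves J. The proof thins an infinite family of input
  tuples until every coordinate is tame: constant, or placed on pairwise distinct lines.\<close>

lemma injective_section:
  obtains Z where "Z \<subseteq> P" "inj_on h Z" "h ` Z = h ` P"
proof
  let ?Z = "inv_into P h ` h ` P"
  show "?Z \<subseteq> P" by (auto intro: inv_into_into)
  show "inj_on h ?Z" by (auto intro!: inj_onI simp: f_inv_into_f)
  show "h ` ?Z = h ` P" by (force simp: image_image f_inv_into_f)
qed

lemma infinite_subset_const_or_inj: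
  assumes "infinite Z"
  obtains Z' where "Z' \<subseteq> Z" "infinite Z'" "(\<exists>c. \<forall>x\<in>Z'. h x = c) \<or> inj_on h Z'"
proof (cases "finite (h ` Z)")
  case True
  then obtain x0 where "x0 \<in> Z" "infinite {x\<in>Z. h x = h x0}"
    using pigeonhole_infinite[OF assms] by blast
  then show ?thesis by (intro that[of "{x\<in>Z. h x = h x0}"]) auto
next
  case False
  obtain Z' where "Z' \<subseteq> Z" "inj_on h Z'" "h ` Z' = h ` Z" by (rule injective_section)
  moreover from this have "infinite Z'" using False finite_imageI by metis
  ultimately show ?thesis by (intro that[of Z']) auto
qed

definition tame :: "(nat \<Rightarrow> pt) set \<Rightarrow> nat \<Rightarrow> bool" where
  "tame Z i \<longleftrightarrow> (\<exists>p. \<forall>a\<in>Z. a i = p) \<or> inj_on (\<lambda>a. snd (a i)) Z"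

lemma tame_subset: "tame Z i \<Longrightarrow> Y \<subseteq> Z \<Longrightarrow> tame Y i"
  unfolding tame_def by (blast intro: inj_on_subset)

text \<open>One coordinate ranging over a set in J can be made tame: if it is not constant on an
  infinite subfamily, it is injective there, and then its lines cannot stay constant
  because lines of a set in J are finite.\<close>

lemma tame_refinement:
  assumes A: "A \<in> idealJ" and Z: "\<forall>a\<in>Z. a i \<in> A" "infinite Z"
  obtains Z' where "Z' \<subseteq> Z" "infinite Z'" "tame Z' i"
proof -
  obtain Z1 where Z1: "Z1 \<subseteq> Z" "infinite Z1" "(\<exists>p. \<forall>a\<in>Z1. a i = p) \<or> inj_on (\<lambda>a. a i) Z1"
    by (rule infinite_subset_const_or_inj[OF Z(2), where h = "\<lambda>a. a i"])
  show ?thesis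
  proof (cases "\<exists>p. \<forall>a\<in>Z1. a i = p")
    case True
    then show ?thesis using Z1 by (intro that[of Z1]) (auto simp: tame_def)
  next
    case False
    then have inj: "inj_on (\<lambda>a. a i) Z1" using Z1(3) by blast
    obtain Z2 where Z2: "Z2 \<subseteq> Z1" "infinite Z2"
      "(\<exists>l. \<forall>a\<in>Z2. snd (a i) = l) \<or> inj_on (\<lambda>a. snd (a i)) Z2"
      by (rule infinite_subset_const_or_inj[OF Z1(2), where h = "\<lambda>a. snd (a i)"])
    have "\<not> (\<exists>l. \<forall>a\<in>Z2. snd (a i) = l)"
    proof
      assume "\<exists>l. \<forall>a\<in>Z2. snd (a i) = l"
      then obtain l where "(\<lambda>a. a i) ` Z2 \<subseteq> A \<inter> line l"
        using Z(1) Z1(1) Z2(1) unfolding line_def by blast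
      then have "finite ((\<lambda>a. a i) ` Z2)"
        using A unfolding mem_idealJ by (meson finite_subset)
      moreover have "inj_on (\<lambda>a. a i) Z2" using inj Z2(1) by (rule inj_on_subset)
      ultimately show False using Z2(2) finite_imageD by blast
    qed
    then show ?thesis using Z1 Z2 by (intro that[of Z2]) (auto simp: tame_def)
  qed
qed

lemma tame_family:
  assumes A: "A \<in> idealJ" and Z: "\<forall>a\<in>Z. \<forall>i<n. a i \<in> A" "infinite Z"
  obtains Z' where "Z' \<subseteq> Z" "infinite Z'" "\<forall>i<n. tame Z' i"
  using Z
proof (induction n arbitrary: thesis)
  case 0
  then show ?case by blast
next
  case (Suc n)
  obtain Z' where Z': "Z' \<subseteq> Z" "infinite Z'" "\<forall>i<n. tame Z' i"
    using Suc.IH Suc.prems(2,3) by (metis less_SucI)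
  have "\<forall>a\<in>Z'. a n \<in> A" using Z'(1) Suc.prems(2) by blast
  then obtain Z'' where Z'': "Z'' \<subseteq> Z'" "infinite Z''" "tame Z'' n"
    by (rule tame_refinement[OF A _ Z'(2)])
  have "tame Z'' i" if "i < Suc n" for i
  proof (cases "i = n")
    case True
    then show ?thesis using Z''(3) by simp
  next
    case False
    then have "tame Z' i" using that Z'(3) by simp
    then show ?thesis using Z''(1) by (rule tame_subset)
  qed
  moreover have "Z'' \<subseteq> Z" using Z'(1) Z''(1) by (rule order_trans[rotated])
  ultimately show ?case using Suc.prems(1)[of Z''] Z''(2) by blast
qed

lemma tame_family_width:
  assumes "\<forall>i<n. tame Z i"
  shows "width_le n (\<Union>a\<in>Z. a ` {..<n})"
  unfolding width_le_def
proof
  fix l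
  define S where "S i = {a i | a. a \<in> Z \<and> snd (a i) = l}" for i
  have "\<exists>p. S i \<subseteq> {p}" if "i < n" for i
  proof (cases "\<exists>p. \<forall>a\<in>Z. a i = p")
    case True
    then show ?thesis unfolding S_def by blast
  next
    case False
    then have "inj_on (\<lambda>a. snd (a i)) Z" using assms that unfolding tame_def by blast
    then show ?thesis unfolding S_def inj_on_def by blast
  qed
  then have S: "finite (S i) \<and> card (S i) \<le> 1" if "i < n" for i
    using that finite_card_le_subset[of "S i" "{_}" 1] by fastforce
  have "(\<Union>a\<in>Z. a ` {..<n}) \<inter> line l = (\<Union>i<n. S i)"
    unfolding S_def line_def by blast
  moreover have "card (\<Union>i<n. S i) \<le> n"
  proof -
    have "card (\<Union>i<n. S i) \<le> (\<Sum>i<n. card (S i))" by (rule card_UN_le) simp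
    also have "\<dots> \<le> (\<Sum>i<n. 1)" using S by (intro sum_mono) simp
    finally show ?thesis by simp
  qed
  ultimately show "finite ((\<Union>a\<in>Z. a ` {..<n}) \<inter> line l) \<and> card ((\<Union>a\<in>Z. a ` {..<n}) \<inter> line l) \<le> n"
    using S by simp
qed

lemma clone_idealI_subset_clone_idealJ: "clone_of_ideal idealI \<subseteq> clone_of_ideal idealJ"
proof
  fix f assume f: "f \<in> clone_of_ideal idealI"
  have "finite (op_image f A \<inter> line m)" if A: "A \<in> idealJ" for A m
  proof (rule ccontr)
    assume inf: "infinite (op_image f A \<inter> line m)"
    define P where "P = {a. (\<forall>i<fst f. a i \<in> A) \<and> snd f a \<in> line m}"
    have "op_image f A \<inter> line m \<subseteq> snd f ` P" unfolding P_def by (auto elim: op_imageE)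
    then have infP: "infinite (snd f ` P)" using inf finite_subset by blast
    obtain Z where Z: "Z \<subseteq> P" "inj_on (snd f) Z" "snd f ` Z = snd f ` P"
      by (rule injective_section)
    have "infinite Z" using infP Z(3) finite_imageI by metis
    moreover have "\<forall>a\<in>Z. \<forall>i<fst f. a i \<in> A" using Z(1) unfolding P_def by blast
    ultimately obtain Z' where Z': "Z' \<subseteq> Z" "infinite Z'" "\<forall>i<fst f. tame Z' i"
      using tame_family[OF A] by blast
    define T where "T = (\<Union>a\<in>Z'. a ` {..<fst f})"
    have "T \<in> idealI" using tame_family_width[OF Z'(3)] unfolding mem_idealI T_def by blast
    then have "op_image f T \<in> idealJ"
      using f idealI_subset_idealJ unfolding clone_of_ideal_def by blast
    then have "finite (op_image f T \<inter> line m)" unfolding mem_idealJ by blast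
    moreover have "snd f ` Z' \<subseteq> op_image f T \<inter> line m"
    proof
      fix y assume "y \<in> snd f ` Z'"
      then obtain a where a: "a \<in> Z'" "y = snd f a" by blast
      then have "snd f a \<in> op_image f T" unfolding T_def by (intro op_imageI) blast
      moreover have "snd f a \<in> line m" using a(1) Z(1) Z'(1) unfolding P_def by blast
      ultimately show "y \<in> op_image f T \<inter> line m" using a(2) by blast
    qed
    moreover have "infinite (snd f ` Z')"
      using Z'(2) inj_on_subset[OF Z(2) Z'(1)] finite_imageD by blast
    ultimately show False using finite_subset by blast
  qed
  then have "op_image f A \<in> idealJ" if "A \<in> idealJ" for A
    using that unfolding mem_idealJ by blast
  then show "f \<in> clone_of_ideal idealJ" using f unfolding clone_of_ideal_def by blast
qed

text \<open>Only finitely many lines are merged into each line, but the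
  diagonal, of width 1, is spread over lines of unbounded length.\<close>

definition line_sum :: "nat \<Rightarrow> nat" where
  "line_sum b = fst (prod_decode b) + snd (prod_decode b)"

definition collapse_op :: op where
  "collapse_op = (1, \<lambda>a. (fst (a 0), line_sum (snd (a 0))))"

lemma finite_line_sum_fibre: "finite {b. line_sum b = m}"
proof (rule finite_subset)
  show "{b. line_sum b = m} \<subseteq> prod_encode ` ({..m} \<times> {..m})"
  proof
    fix b assume "b \<in> {b. line_sum b = m}"
    then have "prod_decode b \<in> {..m} \<times> {..m}"
      unfolding line_sum_def by (cases "prod_decode b") auto
    then show "b \<in> prod_encode ` ({..m} \<times> {..m})" by (metis image_eqI prod_decode_inverse)
  qed
qed simp

lemma collapse_op_in_clone_idealJ: "collapse_op \<in> clone_of_ideal idealJ"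
proof -
  have "op_image collapse_op A \<in> idealJ" if A: "A \<in> idealJ" for A
  proof -
    have "op_image collapse_op A \<inter> line m \<subseteq>
        (\<lambda>p. (fst p, m)) ` (\<Union>b\<in>{b. line_sum b = m}. A \<inter> line b)" for m
      unfolding collapse_op_def op_image_def line_def by force
    moreover have "finite (\<Union>b\<in>{b. line_sum b = m}. A \<inter> line b)" for m
      using A finite_line_sum_fibre unfolding mem_idealJ by blast
    ultimately show ?thesis unfolding mem_idealJ by (meson finite_imageI finite_subset)
  qed
  moreover have "is_op collapse_op" unfolding is_op_def collapse_op_def by simp
  ultimately show ?thesis unfolding clone_of_ideal_def by blast
qed

lemma collapse_op_notin_clone_idealI: "collapse_op \<notin> clone_of_ideal idealI"
proof
  define \<Delta> :: "pt set" where "\<Delta> = {(b, b) | b. True}"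
  have "\<Delta> \<inter> line l = {(l, l)}" for l unfolding \<Delta>_def line_def by auto
  then have "width_le 1 \<Delta>" unfolding width_le_def by simp
  then have "\<Delta> \<in> idealI" unfolding mem_idealI by blast
  moreover assume "collapse_op \<in> clone_of_ideal idealI"
  ultimately have "op_image collapse_op \<Delta> \<in> idealI" unfolding clone_of_ideal_def by blast
  then obtain k where k: "width_le k (op_image collapse_op \<Delta>)" unfolding mem_idealI by blast
  define F where "F = (\<lambda>x. (prod_encode (x, k - x), k)) ` {..k}"
  have "F \<subseteq> op_image collapse_op \<Delta> \<inter> line k"
  proof
    fix y assume "y \<in> F"
    then obtain x where x: "x \<le> k" "y = (prod_encode (x, k - x), k)" unfolding F_def by blast
    define b where "b = prod_encode (x, k - x)"
    have "y = snd collapse_op (\<lambda>_. (b, b))"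
      using x unfolding collapse_op_def line_sum_def b_def by simp
    moreover have "(b, b) \<in> \<Delta>" unfolding \<Delta>_def by blast
    then have "snd collapse_op (\<lambda>_. (b, b)) \<in> op_image collapse_op \<Delta>" by (intro op_imageI)
    moreover have "y \<in> line k" using x(2) unfolding line_def by simp
    ultimately show "y \<in> op_image collapse_op \<Delta> \<inter> line k" by simp
  qed
  moreover have "card F = Suc k" unfolding F_def by (subst card_image) (auto intro: inj_onI)
  ultimately show False using k unfolding width_le_def by (metis card_mono not_less_eq_eq)
qed

text \<open>Fix f with f[A] in J but not in I for some A in
  I. Every line j of a set S in J embeds injectively, by h j, into some line l j of f[A];
  the binary pullback operation undoes these embeddings and preserves I.\<close>

lemma unbounded_lines:
  assumes "R \<in> idealJ" "R \<notin> idealI"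
  obtains l where "N \<le> card (R \<inter> line l)"
proof (rule ccontr)
  assume "\<not> thesis"
  then have "card (R \<inter> line l) \<le> N" for l using that by (meson nat_le_linear)
  then have "width_le N R" using assms(1) unfolding width_le_def mem_idealJ by blast
  then show False using assms(2) unfolding mem_idealI by blast
qed

lemma line_embeddings:
  assumes R: "R \<in> idealJ" "R \<notin> idealI" and S: "S \<in> idealJ"
  obtains l h where "\<And>j. h j ` (S \<inter> line j) \<subseteq> R \<inter> line (l j)" "\<And>j. inj_on (h j) (S \<inter> line j)"
proof -
  have "\<exists>l h. h ` (S \<inter> line j) \<subseteq> R \<inter> line l \<and> inj_on h (S \<inter> line j)" for j
  proof -
    obtain l where "card (S \<inter> line j) \<le> card (R \<inter> line l)" by (rule unbounded_lines[OF R])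
    moreover have "finite (S \<inter> line j)" "finite (R \<inter> line l)"
      using R(1) S unfolding mem_idealJ by blast+
    ultimately show ?thesis using card_le_inj[of "S \<inter> line j" "R \<inter> line l"] by blast
  qed
  then obtain l where "\<forall>j. \<exists>h. h ` (S \<inter> line j) \<subseteq> R \<inter> line (l j) \<and> inj_on h (S \<inter> line j)"
    by metis
  then obtain h where "\<forall>j. h j ` (S \<inter> line j) \<subseteq> R \<inter> line (l j) \<and> inj_on (h j) (S \<inter> line j)"
    by metis
  then show ?thesis using that by blast
qed

definition pullback_op :: "pt set \<Rightarrow> (nat \<Rightarrow> pt \<Rightarrow> pt) \<Rightarrow> op" where
  "pullback_op S h = (2, \<lambda>a.
     if fst (a 1) = 0 \<and> a 0 \<in> h (snd (a 1)) ` (S \<inter> line (snd (a 1)))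
     then inv_into (S \<inter> line (snd (a 1))) (h (snd (a 1))) (a 0) else (0, 0))"

lemma pullback_op_apply:
  "snd (pullback_op S h) a = (if fst (a 1) = 0 \<and> a 0 \<in> h (snd (a 1)) ` (S \<inter> line (snd (a 1)))
     then inv_into (S \<inter> line (snd (a 1))) (h (snd (a 1))) (a 0) else (0, 0))"
  by (simp only: pullback_op_def snd_conv)

text \<open>Each output line j of the pullback comes from the single input line l j, so the pullback
  preserves I.\<close>

lemma pullback_op_in_clone_idealI:
  assumes h: "\<And>j. h j ` (S \<inter> line j) \<subseteq> line (l j)"
  shows "pullback_op S h \<in> clone_of_ideal idealI"
proof -
  have "op_image (pullback_op S h) B \<in> idealI" if "B \<in> idealI" for B
  proof -
    obtain w where w: "width_le w B" using \<open>B \<in> idealI\<close> unfolding mem_idealI by blast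
    define X where "X j = inv_into (S \<inter> line j) (h j) ` (B \<inter> line (l j))" for j
    have "op_image (pullback_op S h) B \<inter> line j \<subseteq> insert (0, 0) (X j)" for j
    proof
      fix y assume y: "y \<in> op_image (pullback_op S h) B \<inter> line j"
      then obtain a where "\<forall>i<fst (pullback_op S h). a i \<in> B" "y = snd (pullback_op S h) a"
        by (blast elim: op_imageE)
      moreover have "snd y = j" using y unfolding line_def by simp
      ultimately have a: "a 0 \<in> B" "y = snd (pullback_op S h) a" "snd y = j"
        unfolding pullback_op_def by simp_all
      show "y \<in> insert (0, 0) (X j)"
      proof (cases "fst (a 1) = 0 \<and> a 0 \<in> h (snd (a 1)) ` (S \<inter> line (snd (a 1)))")
        case True
        have y: "y = inv_into (S \<inter> line (snd (a 1))) (h (snd (a 1))) (a 0)"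
          using a(2) unfolding pullback_op_apply if_P[OF True] .
        have "y \<in> S \<inter> line (snd (a 1))" unfolding y by (rule inv_into_into) (use True in blast)
        then have j: "snd (a 1) = j" using a(3) unfolding line_def by simp
        have "a 0 \<in> h j ` (S \<inter> line j)" using True unfolding j by blast
        then have "a 0 \<in> B \<inter> line (l j)" using a(1) h[of j] by blast
        then show ?thesis unfolding X_def y j by blast
      next
        case False
        then show ?thesis using a(2) unfolding pullback_op_apply if_not_P[OF False] by simp
      qed
    qed
    moreover have "finite (X j) \<and> card (X j) \<le> w" for j
    proof -
      have "finite (B \<inter> line (l j))" "card (B \<inter> line (l j)) \<le> w"
        using w unfolding width_le_def by auto
      then show ?thesis unfolding X_def using card_image_le le_trans by blast
    qed
    ultimately have "width_le (Suc w) (op_image (pullback_op S h) B)"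
      unfolding width_le_def by (meson finite_card_insert_le finite_card_le_subset)
    then show ?thesis unfolding mem_idealI by blast
  qed
  moreover have "is_op (pullback_op S h)"
    by (rule is_opI) (auto simp: pullback_op_def numeral_2_eq_2 less_Suc_eq)
  ultimately show ?thesis unfolding clone_of_ideal_def by blast
qed

lemma pullback_op_inverts:
  assumes "p \<in> S" "inj_on (h (snd p)) (S \<inter> line (snd p))"
    and "a 0 = h (snd p) p" "a 1 = (0, snd p)"
  shows "snd (pullback_op S h) a = p"
proof -
  have "p \<in> S \<inter> line (snd p)" using assms(1) unfolding line_def by simp
  then show ?thesis using assms(2-4) unfolding pullback_op_def by simp
qed

lemma preimage_choice:
  assumes "\<forall>p\<in>S. h p \<in> op_image f A"
  shows "\<exists>pre. \<forall>p\<in>S. (\<forall>i<fst f. pre p i \<in> A) \<and> snd f (pre p) = h p"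
proof -
  have "\<exists>a. (\<forall>i<fst f. a i \<in> A) \<and> snd f a = h p" if p: "p \<in> S" for p
  proof -
    have "h p \<in> op_image f A" using assms p by blast
    then obtain a where "\<forall>i<fst f. a i \<in> A" "h p = snd f a" by (rule op_imageE)
    then show ?thesis by (intro exI[of _ a]) simp
  qed
  then show ?thesis by (rule bchoice[OF ballI])
qed

lemma first_column_in_idealI: "{p :: pt. fst p = 0} \<in> idealI"
proof -
  have "{p :: pt. fst p = 0} \<inter> line j = {(0, j)}" for j unfolding line_def by auto
  then show ?thesis unfolding mem_idealI width_le_def by auto
qed

text \<open>If D contains C_I and an f with f[A] in J - I for some A in I, then D contains every
  operation r whose range lies in a member S of J: for a point p of S choose a tuple pre p
  over A with f(pre p) = h (snd p) p; then r = pullback(f(pre(r)), (0|line of r)), where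
  the inner operations have ranges in A or in the first column and so lie in C_I.\<close>

lemma J_range_ops_in_clone:
  assumes D: "is_clone D" "clone_of_ideal idealI \<subseteq> D"
    and f: "f \<in> D" "is_op f" "A \<in> idealI" "op_image f A \<in> idealJ" "op_image f A \<notin> idealI"
    and r: "is_op r" "S \<in> idealJ" "\<forall>x. snd r x \<in> S"
  shows "r \<in> D"
proof -
  define k where "k = fst r"
  have k: "1 \<le> k" using r(1) unfolding is_op_def k_def by simp
  obtain l h where h: "\<And>j. h j ` (S \<inter> line j) \<subseteq> op_image f A \<inter> line (l j)"
    and inj: "\<And>j. inj_on (h j) (S \<inter> line j)"
    using line_embeddings[OF f(4,5) r(2)] by metis
  have "\<forall>p\<in>S. h (snd p) p \<in> op_image f A"
  proof
    fix p assume "p \<in> S"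
    then have "p \<in> S \<inter> line (snd p)" unfolding line_def by simp
    then show "h (snd p) p \<in> op_image f A" using h[of "snd p"] by blast
  qed
  then obtain pre where "\<forall>p\<in>S. (\<forall>i<fst f. pre p i \<in> A) \<and> snd f (pre p) = h (snd p) p"
    using preimage_choice[of S "\<lambda>p. h (snd p) p" f A] by blast
  then have pre: "(\<forall>i<fst f. pre p i \<in> A) \<and> snd f (pre p) = h (snd p) p" if "p \<in> S" for p
    using that by blast
  define \<rho> where "\<rho> i = (k, \<lambda>x. pre (snd r x) i)" for i
  define tag where "tag = (k, \<lambda>x. (0::nat, snd (snd r x)))"
  have "\<rho> i \<in> D" if "i < fst f" for i
  proof -
    have "is_op (\<rho> i)" unfolding \<rho>_def k_def by (rule is_op_postcomp[OF r(1)])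
    moreover have "\<forall>x. snd (\<rho> i) x \<in> A" using pre r(3) that unfolding \<rho>_def by simp
    ultimately show ?thesis using bounded_range_in_clone[OF is_ideal_idealI _ f(3)] D(2) by blast
  qed
  then have fD: "comp_op f k \<rho> \<in> D" using clone_comp[OF D(1) f(1) k] unfolding \<rho>_def by simp
  have "tag \<in> D"
  proof -
    have "is_op tag" unfolding tag_def k_def by (rule is_op_postcomp[OF r(1)])
    moreover note first_column_in_idealI
    moreover have "\<forall>x. snd tag x \<in> {p. fst p = 0}" unfolding tag_def by simp
    ultimately show ?thesis using bounded_range_in_clone[OF is_ideal_idealI] D(2) by blast
  qed
  define G where "G i = (if i = 0 then comp_op f k \<rho> else tag)" for i :: nat
  have "pullback_op S h \<in> D"
    using pullback_op_in_clone_idealI[of h S l] h D(2) by blast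
  then have "comp_op (pullback_op S h) k G \<in> D"
    using clone_comp[OF D(1) _ k] fD \<open>tag \<in> D\<close>
    unfolding G_def by (simp add: comp_op_def tag_def)
  moreover have "comp_op (pullback_op S h) k G = r"
  proof (rule op_eqI)
    fix x
    have x: "snd r x \<in> S" using r(3) by simp
    then show "snd (comp_op (pullback_op S h) k G) x = snd r x"
      unfolding comp_op_def snd_conv
      by (rule pullback_op_inverts[where p = "snd r x"]) (simp_all add: inj G_def comp_op_def \<rho>_def tag_def pre[OF x])
  qed (simp add: comp_op_def k_def)
  ultimately show ?thesis by simp
qed

definition extends :: "(nat \<Rightarrow> pt) \<Rightarrow> pt option list \<Rightarrow> bool" where
  "extends z r \<longleftrightarrow> (\<forall>i<length r. \<forall>p. r ! i = Some p \<longrightarrow> z i = p)"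

lemma extendsD: "extends z r \<Longrightarrow> i < length r \<Longrightarrow> r ! i = Some p \<Longrightarrow> z i = p"
  unfolding extends_def by blast

definition free_pos :: "pt option list \<Rightarrow> nat \<Rightarrow> bool" where
  "free_pos r i \<longleftrightarrow> i < length r \<and> r ! i = None"

text \<open>If the j-th family W j consists of finitely many tuples extending r whose free
  coordinates lie on lines of index at least j, then all their coordinates together form a
  set in J: on line l only the families with j at most l and the finitely many fixed
  values of r contribute.\<close>

lemma high_coordinates_in_idealJ:
  assumes W: "\<And>j. finite (W j)"
    and ext: "\<And>j z. z \<in> W j \<Longrightarrow> extends z r \<and> (\<forall>i. free_pos r i \<longrightarrow> j \<le> snd (z i))"
  shows "(\<Union>j. \<Union>z\<in>W j. z ` {..<length r}) \<in> idealJ"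
  unfolding mem_idealJ
proof
  fix l
  let ?T = "\<Union>j. \<Union>z\<in>W j. z ` {..<length r}"
  have "?T \<inter> line l \<subseteq> the ` set r \<union> (\<Union>j\<le>l. \<Union>z\<in>W j. z ` {..<length r})"
  proof
    fix x assume "x \<in> ?T \<inter> line l"
    then obtain j z i where z: "z \<in> W j" "i < length r" "x = z i" "snd x = l"
      unfolding line_def by blast
    show "x \<in> the ` set r \<union> (\<Union>j\<le>l. \<Union>z\<in>W j. z ` {..<length r})"
    proof (cases "r ! i")
      case None
      then have "free_pos r i" using z(2) unfolding free_pos_def by simp
      then have "j \<le> l" using ext[OF z(1)] z(3,4) by blast
      then show ?thesis using z by blast
    next
      case (Some p)
      then have "z i = p" using ext[OF z(1)] z(2) extendsD by blast
      moreover have "Some p \<in> set r" using Some z(2) nth_mem by metis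
      ultimately have "x \<in> the ` set r" using z(3) by force
      then show ?thesis by blast
    qed
  qed
  moreover have "finite (the ` set r \<union> (\<Union>j\<le>l. \<Union>z\<in>W j. z ` {..<length r}))"
    using W by simp
  ultimately show "finite (?T \<inter> line l)" by (rule finite_subset)
qed

text \<open>Throughout the following locale, g is a k-ary operation preserving J. It is obtained from
  its arguments and k+1 auxiliary operations with range in J by an operation preserving I.\<close>

locale J_preserving =
  fixes g :: "(nat \<Rightarrow> pt) \<Rightarrow> pt" and k :: nat
  assumes preserves_J: "A \<in> idealJ \<Longrightarrow> op_image (k, g) A \<in> idealJ"
begin

definition outputs :: "pt option list \<Rightarrow> nat \<Rightarrow> nat \<Rightarrow> pt set" where
  "outputs r m N = {g z | z. extends z r \<and> (\<forall>i. free_pos r i \<longrightarrow> N \<le> snd (z i)) \<and> snd (g z) = m}"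

text \<open>Otherwise choose, for each j, j outputs with
  preimages whose free coordinates lie on lines of index at least j; all their coordinates
  form a set T in J, while g[T] would have an infinite line m.\<close>

lemma outputs_eventually_finite:
  assumes len: "length r = k"
  shows "\<exists>N. finite (outputs r m N)"
proof (rule ccontr)
  assume "\<nexists>N. finite (outputs r m N)"
  then have "\<exists>Y. finite Y \<and> card Y = j \<and> Y \<subseteq> outputs r m j" for j
    using infinite_arbitrarily_large by blast
  then obtain Y where Y: "\<And>j. finite (Y j) \<and> card (Y j) = j \<and> Y j \<subseteq> outputs r m j" by metis
  define P where "P j y z \<longleftrightarrow> extends z r \<and> (\<forall>i. free_pos r i \<longrightarrow> j \<le> snd (z i)) \<and> snd (g z) = m \<and> g z = y"
    for j y z
  define pre where "pre j y = (SOME z. P j y z)" for j y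
  have pre: "P j y (pre j y)" if "y \<in> Y j" for j y
  proof -
    have "\<exists>z. P j y z" using that Y unfolding outputs_def P_def by blast
    then show ?thesis unfolding pre_def by (rule someI_ex)
  qed
  define T where "T = (\<Union>j. \<Union>z\<in>pre j ` Y j. z ` {..<length r})"
  have "T \<in> idealJ" unfolding T_def
    by (rule high_coordinates_in_idealJ) (use Y pre in \<open>auto simp: P_def\<close>)
  then have fin: "finite (op_image (k, g) T \<inter> line m)" using preserves_J unfolding mem_idealJ by blast
  have sub: "Y j \<subseteq> op_image (k, g) T \<inter> line m" for j
  proof
    fix y assume y: "y \<in> Y j"
    have "g (pre j y) \<in> op_image (k, g) T"
      using y len unfolding T_def by (intro op_imageI[of "(k, g)", simplified]) blast
    then show "y \<in> op_image (k, g) T \<inter> line m" using pre[OF y] unfolding P_def line_def by auto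
  qed
  have "card (Y (Suc (card (op_image (k, g) T \<inter> line m)))) \<le> card (op_image (k, g) T \<inter> line m)"
    using card_mono[OF fin sub] .
  then show False using Y by (metis Suc_n_not_le_n)
qed

definition threshold :: "pt option list \<Rightarrow> nat \<Rightarrow> nat" where
  "threshold r m = (LEAST N. finite (outputs r m N))"

lemma finite_outputs_threshold: "length r = k \<Longrightarrow> finite (outputs r m (threshold r m))"
  unfolding threshold_def using outputs_eventually_finite by (metis LeastI_ex)

definition settled :: "pt option list \<Rightarrow> nat \<Rightarrow> (nat \<Rightarrow> pt) \<Rightarrow> bool" where
  "settled r m z \<longleftrightarrow> (\<forall>i. free_pos r i \<longrightarrow> threshold r m \<le> snd (z i))"

definition next_pos :: "pt option list \<Rightarrow> nat \<Rightarrow> (nat \<Rightarrow> pt) \<Rightarrow> nat" where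
  "next_pos r m z = (LEAST i. free_pos r i \<and> snd (z i) < threshold r m)"

lemma next_pos_spec: "\<not> settled r m z \<Longrightarrow> free_pos r (next_pos r m z) \<and> snd (z (next_pos r m z)) < threshold r m"
  unfolding settled_def next_pos_def by (metis (mono_tags, lifting) LeastI_ex not_le)

definition refine :: "nat \<Rightarrow> (nat \<Rightarrow> pt) \<Rightarrow> pt option list \<Rightarrow> pt option list" where
  "refine m z r = (if settled r m z then r else r[next_pos r m z := Some (z (next_pos r m z))])"

definition assignment :: "nat \<Rightarrow> (nat \<Rightarrow> pt) \<Rightarrow> nat \<Rightarrow> pt option list" where
  "assignment m z s = (refine m z ^^ s) (replicate k None)"

lemma assignment_0: "assignment m z 0 = replicate k None"
  unfolding assignment_def by simp

lemma assignment_Suc: "assignment m z (Suc s) = refine m z (assignment m z s)"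
  unfolding assignment_def by simp

lemma length_assignment: "length (assignment m z s) = k"
  by (induction s) (simp_all add: assignment_0 assignment_Suc refine_def)

lemma extends_assignment: "extends z (assignment m z s)"
proof (induction s)
  case 0
  then show ?case unfolding assignment_0 extends_def by simp
next
  case (Suc s)
  let ?r = "assignment m z s"
  show ?case
  proof (cases "settled ?r m z")
    case False
    then have "next_pos ?r m z < length ?r" using next_pos_spec unfolding free_pos_def by blast
    then show ?thesis using Suc False unfolding assignment_Suc refine_def extends_def
      by (auto simp: nth_list_update)
  qed (use Suc in \<open>simp add: assignment_Suc refine_def\<close>)
qed

definition fixed_pos :: "pt option list \<Rightarrow> nat set" where
  "fixed_pos r = {i. i < length r \<and> r ! i \<noteq> None}"

lemma assignment_progress: "settled (assignment m z s) m z \<or> s \<le> card (fixed_pos (assignment m z s))"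
proof (induction s)
  case (Suc s)
  let ?r = "assignment m z s"
  show ?case
  proof (cases "settled ?r m z")
    case False
    let ?i = "next_pos ?r m z"
    have i: "free_pos ?r ?i" using next_pos_spec[OF False] by simp
    then have "fixed_pos (?r[?i := Some (z ?i)]) = insert ?i (fixed_pos ?r)"
      unfolding fixed_pos_def free_pos_def by (auto simp: nth_list_update)
    moreover have "?i \<notin> fixed_pos ?r" "finite (fixed_pos ?r)"
      using i unfolding fixed_pos_def free_pos_def by auto
    ultimately show ?thesis using Suc False unfolding assignment_Suc refine_def by simp
  qed (simp add: assignment_Suc refine_def)
qed simp

text \<open>After k steps every tuple is settled, since all positions would otherwise be fixed.\<close>

lemma settled_assignment: "settled (assignment m z k) m z"
proof (rule ccontr)
  let ?r = "assignment m z k"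
  assume ns: "\<not> settled ?r m z"
  then have "k \<le> card (fixed_pos ?r)" using assignment_progress by blast
  moreover have "fixed_pos ?r \<subseteq> {..<k}" unfolding fixed_pos_def length_assignment by blast
  ultimately have "fixed_pos ?r = {..<k}" by (metis card_lessThan card_seteq finite_lessThan)
  then have "\<not> free_pos ?r i" for i unfolding fixed_pos_def free_pos_def length_assignment by auto
  then show False using ns unfolding settled_def by blast
qed

text \<open>The s-th code of z lies on the line numbering the pair (m, r) of the output line and the
  current assignment; its x-coordinate encodes either the next position together with the
  line of its value, or, once settled, the x-coordinate of g z.\<close>

definition code :: "nat \<Rightarrow> (nat \<Rightarrow> pt) \<Rightarrow> pt" where
  "code s z = (let m = snd (g z); r = assignment m z s; i = next_pos r m z in
     (if settled r m z then 2 * fst (g z) else Suc (2 * to_nat (i, snd (z i))), to_nat (m, r)))"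

lemma code_eq:
  assumes "snd (g z) = m" "assignment m z s = r"
  shows "code s z = (if settled r m z then 2 * fst (g z)
      else Suc (2 * to_nat (next_pos r m z, snd (z (next_pos r m z)))), to_nat (m, r))"
  unfolding code_def Let_def assms ..

lemma code_line:
  assumes "snd (code s z) = L" "from_nat L = (m, r)"
  shows "snd (g z) = m" "assignment m z s = r"
proof -
  have "to_nat (snd (g z), assignment (snd (g z)) z s) = L"
    using assms(1) unfolding code_def Let_def by simp
  then have "(snd (g z), assignment (snd (g z)) z s) = (m, r)"
    using assms(2) by (metis from_nat_to_nat)
  then show "snd (g z) = m" "assignment m z s = r" by auto
qed

definition code_values :: "pt option list \<Rightarrow> nat \<Rightarrow> nat set" where
  "code_values r m = (\<lambda>y. 2 * fst y) ` outputs r m (threshold r m)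
     \<union> (\<lambda>ib. Suc (2 * to_nat ib)) ` ({..<k} \<times> {..<threshold r m})"

lemma finite_code_values: "length r = k \<Longrightarrow> finite (code_values r m)"
  unfolding code_values_def using finite_outputs_threshold by blast

lemma fst_code_in_code_values:
  assumes mr: "snd (g z) = m" "assignment m z s = r"
  shows "fst (code s z) \<in> code_values r m"
proof (cases "settled r m z")
  case True
  then have "g z \<in> outputs r m (threshold r m)"
    using extends_assignment[of z m s] mr unfolding outputs_def settled_def by blast
  then show ?thesis using True unfolding code_eq[OF mr] code_values_def by simp
next
  case False
  have "next_pos r m z < k" "snd (z (next_pos r m z)) < threshold r m"
    using next_pos_spec[OF False] length_assignment mr(2) unfolding free_pos_def by auto
  then show ?thesis using False unfolding code_eq[OF mr] code_values_def by simp
qed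

text \<open>Each code operation has its range in J, as the threshold makes the x-coordinates on each
  line finite in number.\<close>

lemma range_code_in_idealJ: "range (code s) \<in> idealJ"
  unfolding mem_idealJ
proof
  fix L
  obtain m :: nat and r :: "pt option list" where mr: "from_nat L = (m, r)" by (metis prod.exhaust)
  show "finite (range (code s) \<inter> line L)"
  proof (cases "range (code s) \<inter> line L = {}")
    case False
    then obtain z0 where "snd (code s z0) = L" unfolding line_def by blast
    then have len: "length r = k" using code_line[OF _ mr] length_assignment by metis
    have "range (code s) \<inter> line L \<subseteq> (\<lambda>c. (c, L)) ` code_values r m"
    proof
      fix y assume "y \<in> range (code s) \<inter> line L"
      then obtain z where z: "y = code s z" "snd y = L" unfolding line_def by blast
      then have "fst y \<in> code_values r m"
        using fst_code_in_code_values code_line[OF _ mr] by simp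
      then show "y \<in> (\<lambda>c. (c, L)) ` code_values r m" using z(2) by (metis image_eqI prod.collapse)
    qed
    then show ?thesis using finite_code_values[OF len] by (meson finite_imageI finite_subset)
  qed simp
qed

definition coded_inputs :: "pt set \<Rightarrow> nat \<Rightarrow> (nat \<Rightarrow> pt) set" where
  "coded_inputs B m = {z. (\<forall>i<k. z i \<in> B) \<and> (\<forall>s\<le>k. code s z \<in> B) \<and> snd (g z) = m}"

definition step_choices :: "pt set \<Rightarrow> nat \<Rightarrow> pt option list \<Rightarrow> (nat \<times> pt) set" where
  "step_choices B m r = {(i, q). (Suc (2 * to_nat (i, snd q)), to_nat (m, r)) \<in> B \<and> q \<in> B}"

lemma step_choices_bound:
  assumes w: "width_le w B"
  shows "finite (step_choices B m r) \<and> card (step_choices B m r) \<le> w * w"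
proof -
  define dec :: "pt \<Rightarrow> nat \<times> nat" where "dec c = from_nat ((fst c - 1) div 2)" for c
  define L where "L = to_nat (m, r)"
  define Sig where "Sig = (SIGMA c:(B \<inter> line L). B \<inter> line (snd (dec c)))"
  have "step_choices B m r \<subseteq> (\<lambda>(c, q). (fst (dec c), q)) ` Sig"
  proof
    fix x assume "x \<in> step_choices B m r"
    then obtain i q where x: "x = (i, q)" "(Suc (2 * to_nat (i, snd q)), L) \<in> B" "q \<in> B"
      unfolding step_choices_def L_def by blast
    define c where "c = (Suc (2 * to_nat (i, snd q)), L)"
    have dc: "dec c = (i, snd q)" unfolding dec_def c_def by simp
    have "c \<in> B \<inter> line L" using x(2) unfolding c_def line_def by simp
    moreover have "q \<in> B \<inter> line (snd (dec c))" using x(3) unfolding dc line_def by simp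
    ultimately have "(c, q) \<in> Sig" unfolding Sig_def by blast
    then show "x \<in> (\<lambda>(c, q). (fst (dec c), q)) ` Sig" using x(1) dc by force
  qed
  moreover have "finite Sig" unfolding Sig_def using w unfolding width_le_def by blast
  moreover have "card Sig \<le> w * w"
  proof -
    have "card Sig = (\<Sum>c\<in>B \<inter> line L. card (B \<inter> line (snd (dec c))))"
      unfolding Sig_def using w unfolding width_le_def by (intro card_SigmaI) auto
    also have "\<dots> \<le> (\<Sum>c\<in>B \<inter> line L. w)" using w unfolding width_le_def by (intro sum_mono) blast
    also have "\<dots> \<le> w * w" using w unfolding width_le_def by simp
    finally show ?thesis .
  qed
  ultimately show ?thesis by (meson card_image_le finite_card_le_subset finite_imageI le_trans)
qed

lemma assignment_step:
  assumes s: "s < k"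
  shows "(\<lambda>z. assignment m z (Suc s)) ` coded_inputs B m \<subseteq> (\<lambda>z. assignment m z s) ` coded_inputs B m \<union>
           (\<Union>r\<in>(\<lambda>z. assignment m z s) ` coded_inputs B m. (\<lambda>(i, q). r[i := Some q]) ` step_choices B m r)"
proof
  fix x assume "x \<in> (\<lambda>z. assignment m z (Suc s)) ` coded_inputs B m"
  then obtain z where z: "z \<in> coded_inputs B m" "x = assignment m z (Suc s)" by blast
  let ?r = "assignment m z s"
  have r: "?r \<in> (\<lambda>z. assignment m z s) ` coded_inputs B m" using z(1) by blast
  have zB: "\<forall>i<k. z i \<in> B" "code s z \<in> B" "snd (g z) = m"
    using z(1) s unfolding coded_inputs_def by auto
  show "x \<in> (\<lambda>z. assignment m z s) ` coded_inputs B m \<union>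
           (\<Union>r\<in>(\<lambda>z. assignment m z s) ` coded_inputs B m. (\<lambda>(i, q). r[i := Some q]) ` step_choices B m r)"
  proof (cases "settled ?r m z")
    case True
    then have "x = ?r" unfolding z(2) assignment_Suc refine_def by simp
    then show ?thesis using r by blast
  next
    case False
    let ?i = "next_pos ?r m z"
    have x: "x = ?r[?i := Some (z ?i)]" unfolding z(2) assignment_Suc refine_def using False by simp
    have "?i < k" using next_pos_spec[OF False] length_assignment unfolding free_pos_def by metis
    moreover have "code s z = (Suc (2 * to_nat (?i, snd (z ?i))), to_nat (m, ?r))"
      using code_eq[OF zB(3) refl] False by simp
    ultimately have "(?i, z ?i) \<in> step_choices B m ?r" unfolding step_choices_def using zB by simp
    then have "x \<in> (\<lambda>(i, q). ?r[i := Some q]) ` step_choices B m ?r" unfolding x by force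
    then show ?thesis using r by blast
  qed
qed

lemma assignments_bound:
  assumes w: "width_le w B" and "s \<le> k"
  shows "finite ((\<lambda>z. assignment m z s) ` coded_inputs B m)
    \<and> card ((\<lambda>z. assignment m z s) ` coded_inputs B m) \<le> Suc (w * w) ^ s"
  using \<open>s \<le> k\<close>
proof (induction s)
  case 0
  have "(\<lambda>z. assignment m z 0) ` coded_inputs B m \<subseteq> {replicate k None}" unfolding assignment_0 by blast
  then have "finite ((\<lambda>z. assignment m z 0) ` coded_inputs B m)
      \<and> card ((\<lambda>z. assignment m z 0) ` coded_inputs B m) \<le> 1"
    by (rule finite_card_le_subset) simp_all
  then show ?case by simp
next
  case (Suc s)
  define V where "V = (\<lambda>z. assignment m z s) ` coded_inputs B m"
  have IH: "finite V" "card V \<le> Suc (w * w) ^ s" using Suc unfolding V_def by auto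
  define U where "U = (\<Union>r\<in>V. (\<lambda>(i, q). r[i := Some q]) ` step_choices B m r)"
  have sub: "(\<lambda>z. assignment m z (Suc s)) ` coded_inputs B m \<subseteq> V \<union> U"
    unfolding V_def U_def using assignment_step Suc by simp
  have E: "finite (step_choices B m r) \<and> card (step_choices B m r) \<le> w * w" for r
    using step_choices_bound[OF w] by blast
  have "finite U" unfolding U_def using IH(1) E by blast
  have "card U \<le> (\<Sum>r\<in>V. card ((\<lambda>(i, q). r[i := Some q]) ` step_choices B m r))"
    unfolding U_def using IH(1) by (rule card_UN_le)
  also have "\<dots> \<le> (\<Sum>r\<in>V. w * w)"
    using E card_image_le le_trans by (intro sum_mono) blast
  also have "\<dots> = card V * (w * w)" by simp
  finally have "card (V \<union> U) \<le> card V * Suc (w * w)"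
    using card_Un_le[of V U] by simp
  also have "\<dots> \<le> Suc (w * w) ^ s * Suc (w * w)" using IH(2) by (rule mult_right_mono) simp
  also have "\<dots> = Suc (w * w) ^ Suc s" by simp
  finally show ?case using sub IH(1) \<open>finite U\<close> finite_card_le_subset by blast
qed

text \<open>Hence the outputs on line m of tuples coded in B are at most (w^2+1)^k w many: the final
  code fixes fst (g z) up to w choices per assignment.\<close>

lemma coded_outputs_bound:
  assumes w: "width_le w B"
  shows "finite (g ` coded_inputs B m) \<and> card (g ` coded_inputs B m) \<le> Suc (w * w) ^ k * w"
proof -
  define V where "V = (\<lambda>z. assignment m z k) ` coded_inputs B m"
  have V: "finite V" "card V \<le> Suc (w * w) ^ k" using assignments_bound[OF w, of k m] unfolding V_def by auto
  define F where "F r = (\<lambda>c. (fst c div 2, m)) ` (B \<inter> line (to_nat (m, r)))" for r :: "pt option list"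
  have sub: "g ` coded_inputs B m \<subseteq> (\<Union>r\<in>V. F r)"
  proof
    fix y assume "y \<in> g ` coded_inputs B m"
    then obtain z where z: "z \<in> coded_inputs B m" "y = g z" by blast
    have zB: "code k z \<in> B" "snd (g z) = m" using z(1) unfolding coded_inputs_def by auto
    let ?r = "assignment m z k"
    have c: "code k z = (2 * fst (g z), to_nat (m, ?r))"
      using code_eq[OF zB(2) refl] settled_assignment by simp
    then have "code k z \<in> B \<inter> line (to_nat (m, ?r))" using zB(1) unfolding line_def by simp
    moreover have "y = (fst (code k z) div 2, m)" using c z(2) zB(2) by (simp add: prod_eq_iff)
    ultimately have "y \<in> F ?r" unfolding F_def by blast
    then show "y \<in> (\<Union>r\<in>V. F r)" using z(1) unfolding V_def by blast
  qed
  have F: "finite (F r) \<and> card (F r) \<le> w" for r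
    using w card_image_le le_trans unfolding F_def width_le_def by blast
  have card: "card (\<Union>r\<in>V. F r) \<le> Suc (w * w) ^ k * w"
  proof -
    have "card (\<Union>r\<in>V. F r) \<le> (\<Sum>r\<in>V. card (F r))" using V(1) by (rule card_UN_le)
    also have "\<dots> \<le> (\<Sum>r\<in>V. w)" using F by (intro sum_mono) blast
    also have "\<dots> \<le> Suc (w * w) ^ k * w" using V(2) by simp
    finally show ?thesis .
  qed
  have "finite (\<Union>r\<in>V. F r)" using V(1) F by blast
  then show ?thesis using finite_card_le_subset[OF sub _ card] by blast
qed

definition trunc :: "(nat \<Rightarrow> pt) \<Rightarrow> nat \<Rightarrow> pt" where
  "trunc b i = (if i < k then b i else (0, 0))"

lemma trunc_cong: "\<forall>i<k. a i = b i \<Longrightarrow> trunc a = trunc b"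
  unfolding trunc_def by auto

definition decode_op :: op where
  "decode_op = (k + Suc k, \<lambda>b. if \<forall>s\<le>k. b (k + s) = code s (trunc b) then g (trunc b) else (0, 0))"

lemma decode_op_is_op: "is_op decode_op"
proof (rule is_opI)
  fix a b :: "nat \<Rightarrow> pt" assume "\<forall>i<fst decode_op. a i = b i"
  then have ab: "\<forall>i<k + Suc k. a i = b i" unfolding decode_op_def by simp
  then have "trunc a = trunc b" by (intro trunc_cong) simp
  moreover have "\<forall>s\<le>k. a (k + s) = b (k + s)" using ab by simp
  ultimately show "snd decode_op a = snd decode_op b" unfolding decode_op_def by auto
qed (simp add: decode_op_def)

lemma decode_op_in_clone_idealI: "decode_op \<in> clone_of_ideal idealI"
proof -
  have "op_image decode_op B \<in> idealI" if "B \<in> idealI" for B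
  proof -
    obtain w where w: "width_le w B" using \<open>B \<in> idealI\<close> unfolding mem_idealI by blast
    have "op_image decode_op B \<inter> line m \<subseteq> insert (0, 0) (g ` coded_inputs B m)" for m
    proof
      fix y assume y: "y \<in> op_image decode_op B \<inter> line m"
      then obtain b where b: "\<forall>i<k + Suc k. b i \<in> B" "y = snd decode_op b"
        unfolding decode_op_def by (auto elim: op_imageE)
      show "y \<in> insert (0, 0) (g ` coded_inputs B m)"
      proof (cases "\<forall>s\<le>k. b (k + s) = code s (trunc b)")
        case True
        then have yg: "y = g (trunc b)" using b(2) unfolding decode_op_def by simp
        have "\<forall>i<k. trunc b i \<in> B" using b(1) unfolding trunc_def by simp
        moreover have "code s (trunc b) \<in> B" if "s \<le> k" for s
          using True b(1) that by (metis add_less_cancel_left le_imp_less_Suc)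
        moreover have "snd (g (trunc b)) = m" using y yg unfolding line_def by simp
        ultimately have "trunc b \<in> coded_inputs B m" unfolding coded_inputs_def by simp
        then show ?thesis using yg by blast
      qed (use b(2) in \<open>auto simp: decode_op_def\<close>)
    qed
    then have "width_le (Suc (Suc (w * w) ^ k * w)) (op_image decode_op B)"
      unfolding width_le_def
      by (meson coded_outputs_bound[OF w] finite_card_insert_le finite_card_le_subset)
    then show ?thesis unfolding mem_idealI by blast
  qed
  then show ?thesis using decode_op_is_op unfolding clone_of_ideal_def by blast
qed

definition code_op :: "nat \<Rightarrow> op" where
  "code_op s = (k, \<lambda>x. code s (trunc x))"

lemma code_op_is_op: "1 \<le> k \<Longrightarrow> is_op (code_op s)"
  by (rule is_opI) (auto simp: code_op_def intro: arg_cong[of _ _ "code s"] trunc_cong)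

lemma decode_op_recovers:
  assumes "is_op (k, g)"
  shows "comp_op decode_op k (\<lambda>i. if i < k then proj k i else code_op (i - k)) = (k, g)"
proof (rule op_eqI)
  fix x
  define b where "b = (\<lambda>i. snd (if i < k then proj k i else code_op (i - k)) x)"
  have tb: "trunc b = trunc x" unfolding b_def trunc_def proj_def by auto
  have "snd (comp_op decode_op k (\<lambda>i. if i < k then proj k i else code_op (i - k))) x
      = snd decode_op b"
    unfolding comp_op_def b_def by simp
  also have "\<dots> = g (trunc b)"
    unfolding decode_op_def snd_conv tb by (simp add: b_def code_op_def)
  also have "\<dots> = g x" using is_op_cong[OF assms] unfolding tb trunc_def by simp
  finally show "snd (comp_op decode_op k (\<lambda>i. if i < k then proj k i else code_op (i - k))) x
      = snd (k, g) x" by simp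
qed (simp add: comp_op_def)

end

lemma clone_idealJ_subset:
  assumes D: "is_clone D" "clone_of_ideal idealI \<subseteq> D"
    and J_range: "\<And>r S. is_op r \<Longrightarrow> S \<in> idealJ \<Longrightarrow> \<forall>x. snd r x \<in> S \<Longrightarrow> r \<in> D"
  shows "clone_of_ideal idealJ \<subseteq> D"
proof
  fix p assume p: "p \<in> clone_of_ideal idealJ"
  obtain k g where kg: "p = (k, g)" by (cases p)
  have op: "is_op (k, g)" and "\<And>A. A \<in> idealJ \<Longrightarrow> op_image (k, g) A \<in> idealJ"
    using p unfolding kg clone_of_ideal_def by auto
  then interpret J_preserving g k by unfold_locales
  have k: "1 \<le> k" using op unfolding is_op_def by simp
  define G where "G i = (if i < k then proj k i else code_op (i - k))" for i
  have "decode_op \<in> D" using decode_op_in_clone_idealI D(2) by blast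
  moreover have "\<forall>i<fst decode_op. G i \<in> D \<and> fst (G i) = k"
  proof (intro allI impI)
    fix i
    show "G i \<in> D \<and> fst (G i) = k"
    proof (cases "i < k")
      case True
      then show ?thesis using clone_proj[OF D(1) k] unfolding G_def proj_def by simp
    next
      case False
      have "code_op (i - k) \<in> D"
        by (rule J_range[OF code_op_is_op[OF k] range_code_in_idealJ[of "i - k"]]) (simp add: code_op_def)
      then show ?thesis using False unfolding G_def code_op_def by simp
    qed
  qed
  ultimately have "comp_op decode_op k G \<in> D" by (rule clone_comp[OF D(1) _ k])
  then show "p \<in> D" using decode_op_recovers[OF op] unfolding G_def kg by simp
qed

lemma clone_idealJ_generated:
  assumes D: "is_clone D" "clone_of_ideal idealI \<subseteq> D"
    and f: "f \<in> D" "f \<in> clone_of_ideal idealJ" "f \<notin> clone_of_ideal idealI"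
  shows "clone_of_ideal idealJ \<subseteq> D"
proof -
  have op: "is_op f" using f(2) unfolding clone_of_ideal_def by simp
  then obtain A where A: "A \<in> idealI" "op_image f A \<notin> idealI"
    using f(3) unfolding clone_of_ideal_def by blast
  then have "op_image f A \<in> idealJ"
    using f(2) idealI_subset_idealJ unfolding clone_of_ideal_def by blast
  then show ?thesis
    using clone_idealJ_subset[OF D] J_range_ops_in_clone[OF D f(1) op A(1) _ A(2)] by blast
qed

theorem mainTheorem1:
  shows "is_clone (clone_of_ideal idealI) \<and> is_clone (clone_of_ideal idealJ)
    \<and> clone_of_ideal idealI \<subset> clone_of_ideal idealJ
    \<and> \<not> (\<exists>D. is_clone D \<and> clone_of_ideal idealI \<subset> D \<and> D \<subset> clone_of_ideal idealJ)"
proof (intro conjI)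
  show "is_clone (clone_of_ideal idealI)" by (rule clone_of_ideal_is_clone[OF is_ideal_idealI])
  show "is_clone (clone_of_ideal idealJ)" by (rule clone_of_ideal_is_clone[OF is_ideal_idealJ])
  show "clone_of_ideal idealI \<subset> clone_of_ideal idealJ"
    using clone_idealI_subset_clone_idealJ collapse_op_in_clone_idealJ collapse_op_notin_clone_idealI
    by blast
  show "\<not> (\<exists>D. is_clone D \<and> clone_of_ideal idealI \<subset> D \<and> D \<subset> clone_of_ideal idealJ)"
  proof
    assume "\<exists>D. is_clone D \<and> clone_of_ideal idealI \<subset> D \<and> D \<subset> clone_of_ideal idealJ"
    then obtain D where D: "is_clone D" "clone_of_ideal idealI \<subset> D" "D \<subset> clone_of_ideal idealJ"
      by blast
    then obtain f where "f \<in> D" "f \<notin> clone_of_ideal idealI" by blast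
    then have "clone_of_ideal idealJ \<subseteq> D"
      using clone_idealJ_generated[OF D(1)] D(2,3) by blast
    then show False using D(3) by blast
  qed
qed

end
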